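(* For parameters $\mu\ge 0$, $0\le c\le\mu$, $\sigma\ge 0$, $\eta_s\ge 0$, $\eta_c\ge 0$, let $u_c^*$ be the optimal value of $$\max_{p_0\in\mathbb{R},\,r\in[0,1]}\; p_0+r\mu-c-\eta_c r^2\sigma^2 \quad\text{subject to}\quad (1-r)\mu-p_0-\eta_s(1-r)^2\sigma^2\ge 0,$$ and let $u_{c,r=0}^*$ be the optimal value of the same problem with $r$ fixed to $0$. Then the set $$\mathbb{T}=\{(\mu,c,\eta_s,\eta_c,\sigma):\ u_c^*\ge 0,\ u_{c,r=0}^*<0,\ \mu\ge 0,\ 0\le c\le\mu,\ \eta_s\ge 0,\ \eta_c\ge 0\}$$ is non-empty; that is, there are parameters for which trade occurs when royalties are allowed but not when they are ruled out.
   Context: Interpretation: a creator (cost $c$) sells an NFT at mint price $p_0$ with royalty rate $r$ to a speculator, who resells it at the realized end-buyer valuation $V$ with mean $\mu$ and variance $\sigma^2$; both have mean-variance utility with risk coefficients $\eta_c$ (creator) and $\eta_s$ (speculator); the constraint is the speculator's participation constraint. Trade occurs iff the creator's optimal utility is nonnegative. *)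

theory Defs
  imports "HOL-Analysis.Analysis"
begin

definition creator_util :: "real \<Rightarrow> real \<Rightarrow> real \<Rightarrow> real \<Rightarrow> real \<Rightarrow> real \<Rightarrow> real" where
  "creator_util \<mu> c \<eta>c \<sigma> p0 r = p0 + r * \<mu> - c - \<eta>c * r\<^sup>2 * \<sigma>\<^sup>2"

definition spec_ok :: "real \<Rightarrow> real \<Rightarrow> real \<Rightarrow> real \<Rightarrow> real \<Rightarrow> bool" where
  "spec_ok \<mu> \<eta>s \<sigma> p0 r \<longleftrightarrow> (1 - r) * \<mu> - p0 - \<eta>s * (1 - r)\<^sup>2 * \<sigma>\<^sup>2 \<ge> 0"

definition u_c_star :: "real \<Rightarrow> real \<Rightarrow> real \<Rightarrow> real \<Rightarrow> real \<Rightarrow> real" where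
  "u_c_star \<mu> c \<eta>s \<eta>c \<sigma> =
     Sup {creator_util \<mu> c \<eta>c \<sigma> p0 r | p0 r. r \<in> {0..1} \<and> spec_ok \<mu> \<eta>s \<sigma> p0 r}"

definition u_c_star_r0 :: "real \<Rightarrow> real \<Rightarrow> real \<Rightarrow> real \<Rightarrow> real \<Rightarrow> real" where
  "u_c_star_r0 \<mu> c \<eta>s \<eta>c \<sigma> =
     Sup {creator_util \<mu> c \<eta>c \<sigma> p0 0 | p0. spec_ok \<mu> \<eta>s \<sigma> p0 0}"

end

theory Submission
  imports Defs
begin

(* Pricing the token so that the speculator's constraint binds, the creator's utility at royalty
   rate r is the surplus mu - c minus the total risk premium sigma^2 (eta_s (1 - r)^2 + eta_c r^2)
   of the two parties.  With r free, the premium is minimised at r = eta_s / (eta_s + eta_c), where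
   it equals sigma^2 eta_s eta_c / (eta_s + eta_c); with r = 0 the speculator bears the whole
   premium eta_s sigma^2.  For a risk-neutral creator the first optimum is mu - c, while the second
   is negative as soon as eta_s sigma^2 > mu - c. *)

definition binding_price :: "real \<Rightarrow> real \<Rightarrow> real \<Rightarrow> real \<Rightarrow> real" where
  "binding_price \<mu> \<eta>s \<sigma> r = (1 - r) * \<mu> - \<eta>s * (1 - r)\<^sup>2 * \<sigma>\<^sup>2"

definition risk_premium :: "real \<Rightarrow> real \<Rightarrow> real \<Rightarrow> real" where
  "risk_premium \<eta>s \<eta>c r = \<eta>s * (1 - r)\<^sup>2 + \<eta>c * r\<^sup>2"

lemma spec_ok_iff_le_binding_price: "spec_ok \<mu> \<eta>s \<sigma> p0 r \<longleftrightarrow> p0 \<le> binding_price \<mu> \<eta>s \<sigma> r"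
  by (auto simp: spec_ok_def binding_price_def)

lemma creator_util_binding_price:
  "creator_util \<mu> c \<eta>c \<sigma> (binding_price \<mu> \<eta>s \<sigma> r) r = \<mu> - c - \<sigma>\<^sup>2 * risk_premium \<eta>s \<eta>c r"
  by (simp add: creator_util_def binding_price_def risk_premium_def algebra_simps)

lemma creator_util_le_binding_price:
  assumes "spec_ok \<mu> \<eta>s \<sigma> p0 r"
  shows "creator_util \<mu> c \<eta>c \<sigma> p0 r \<le> \<mu> - c - \<sigma>\<^sup>2 * risk_premium \<eta>s \<eta>c r"
  using assms creator_util_binding_price[of \<mu> c \<eta>c \<sigma> \<eta>s r]
  by (simp add: spec_ok_iff_le_binding_price creator_util_def)

(* For eta_s = eta_c = 0 both sides are 0, since x / 0 = 0. *)
lemma risk_premium_ge: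
  fixes \<eta>s \<eta>c :: real
  assumes "\<eta>s \<ge> 0" "\<eta>c \<ge> 0"
  shows "\<eta>s * \<eta>c / (\<eta>s + \<eta>c) \<le> risk_premium \<eta>s \<eta>c r"
proof (cases "\<eta>s + \<eta>c = 0")
  case True
  with assms show ?thesis by (simp add: risk_premium_def)
next
  case False
  with assms have pos: "\<eta>s + \<eta>c > 0" by linarith
  have "(\<eta>s + \<eta>c) * risk_premium \<eta>s \<eta>c r - \<eta>s * \<eta>c = (\<eta>s * (1 - r) - \<eta>c * r)\<^sup>2"
    by (simp add: risk_premium_def power2_eq_square algebra_simps)
  then have "\<eta>s * \<eta>c \<le> (\<eta>s + \<eta>c) * risk_premium \<eta>s \<eta>c r"
    by (metis diff_ge_0_iff_ge zero_le_power2)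
  with pos show ?thesis by (simp add: divide_le_eq mult.commute)
qed

lemma risk_premium_optimal_rate:
  fixes \<eta>s \<eta>c :: real
  assumes "\<eta>s \<ge> 0" "\<eta>c \<ge> 0"
  shows "\<eta>s / (\<eta>s + \<eta>c) \<in> {0..1}"
    and "risk_premium \<eta>s \<eta>c (\<eta>s / (\<eta>s + \<eta>c)) = \<eta>s * \<eta>c / (\<eta>s + \<eta>c)"
proof -
  show "\<eta>s / (\<eta>s + \<eta>c) \<in> {0..1}"
    using assms by (cases "\<eta>s + \<eta>c = 0") (auto simp: divide_le_eq_1)
  show "risk_premium \<eta>s \<eta>c (\<eta>s / (\<eta>s + \<eta>c)) = \<eta>s * \<eta>c / (\<eta>s + \<eta>c)"
  proof (cases "\<eta>s + \<eta>c = 0")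
    case True
    with assms show ?thesis by (simp add: risk_premium_def)
  next
    case False
    then have "1 - \<eta>s / (\<eta>s + \<eta>c) = \<eta>c / (\<eta>s + \<eta>c)"
      by (simp add: field_simps)
    then have "risk_premium \<eta>s \<eta>c (\<eta>s / (\<eta>s + \<eta>c)) = \<eta>s * \<eta>c * (\<eta>s + \<eta>c) / (\<eta>s + \<eta>c)\<^sup>2"
      unfolding risk_premium_def
      by (simp only: power_divide)
         (simp add: add_divide_distrib[symmetric] power2_eq_square algebra_simps)
    with False show ?thesis
      by (simp add: power2_eq_square)
  qed
qed

theorem u_c_star_eq:
  assumes "\<eta>s \<ge> 0" "\<eta>c \<ge> 0"
  shows "u_c_star \<mu> c \<eta>s \<eta>c \<sigma> = \<mu> - c - \<sigma>\<^sup>2 * (\<eta>s * \<eta>c / (\<eta>s + \<eta>c))"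
  unfolding u_c_star_def
proof (rule cSup_eq_maximum)
  let ?r = "\<eta>s / (\<eta>s + \<eta>c)"
  have "?r \<in> {0..1}" and "spec_ok \<mu> \<eta>s \<sigma> (binding_price \<mu> \<eta>s \<sigma> ?r) ?r"
    using risk_premium_optimal_rate(1)[OF assms] by (simp_all add: spec_ok_iff_le_binding_price)
  moreover have "creator_util \<mu> c \<eta>c \<sigma> (binding_price \<mu> \<eta>s \<sigma> ?r) ?r
      = \<mu> - c - \<sigma>\<^sup>2 * (\<eta>s * \<eta>c / (\<eta>s + \<eta>c))"
    using risk_premium_optimal_rate(2)[OF assms] by (simp add: creator_util_binding_price)
  ultimately show "\<mu> - c - \<sigma>\<^sup>2 * (\<eta>s * \<eta>c / (\<eta>s + \<eta>c))
      \<in> {creator_util \<mu> c \<eta>c \<sigma> p0 r | p0 r. r \<in> {0..1} \<and> spec_ok \<mu> \<eta>s \<sigma> p0 r}"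
    by (intro CollectI exI[of _ "binding_price \<mu> \<eta>s \<sigma> ?r"] exI[of _ ?r]) simp
next
  fix x assume "x \<in> {creator_util \<mu> c \<eta>c \<sigma> p0 r | p0 r. r \<in> {0..1} \<and> spec_ok \<mu> \<eta>s \<sigma> p0 r}"
  then obtain p0 r where "x = creator_util \<mu> c \<eta>c \<sigma> p0 r" and "spec_ok \<mu> \<eta>s \<sigma> p0 r"
    by blast
  then have "x \<le> \<mu> - c - \<sigma>\<^sup>2 * risk_premium \<eta>s \<eta>c r"
    using creator_util_le_binding_price by blast
  also have "\<dots> \<le> \<mu> - c - \<sigma>\<^sup>2 * (\<eta>s * \<eta>c / (\<eta>s + \<eta>c))"
    using mult_left_mono[OF risk_premium_ge[OF assms, of r], of "\<sigma>\<^sup>2"] by simp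
  finally show "x \<le> \<mu> - c - \<sigma>\<^sup>2 * (\<eta>s * \<eta>c / (\<eta>s + \<eta>c))" .
qed

theorem u_c_star_r0_eq: "u_c_star_r0 \<mu> c \<eta>s \<eta>c \<sigma> = \<mu> - c - \<eta>s * \<sigma>\<^sup>2"
  unfolding u_c_star_r0_def
proof (rule cSup_eq_maximum)
  show "\<mu> - c - \<eta>s * \<sigma>\<^sup>2 \<in> {creator_util \<mu> c \<eta>c \<sigma> p0 0 | p0. spec_ok \<mu> \<eta>s \<sigma> p0 0}"
    using creator_util_binding_price[of \<mu> c \<eta>c \<sigma> \<eta>s 0]
    by (force simp: spec_ok_iff_le_binding_price risk_premium_def)
next
  fix x assume "x \<in> {creator_util \<mu> c \<eta>c \<sigma> p0 0 | p0. spec_ok \<mu> \<eta>s \<sigma> p0 0}"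
  then obtain p0 where "x = creator_util \<mu> c \<eta>c \<sigma> p0 0" and "spec_ok \<mu> \<eta>s \<sigma> p0 0"
    by blast
  then show "x \<le> \<mu> - c - \<eta>s * \<sigma>\<^sup>2"
    using creator_util_le_binding_price[of \<mu> \<eta>s \<sigma> p0 0 c \<eta>c]
    by (simp add: risk_premium_def mult.commute)
qed

theorem corollary3:
  shows "\<exists>\<mu> c \<eta>s \<eta>c \<sigma> :: real.
     \<sigma> \<ge> 0 \<and> \<mu> \<ge> 0 \<and> 0 \<le> c \<and> c \<le> \<mu> \<and> \<eta>s \<ge> 0 \<and> \<eta>c \<ge> 0 \<and>
     u_c_star \<mu> c \<eta>s \<eta>c \<sigma> \<ge> 0 \<and> u_c_star_r0 \<mu> c \<eta>s \<eta>c \<sigma> < 0"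
proof -
  have "u_c_star 1 (1/2) 1 0 1 = 1/2"
    by (simp add: u_c_star_eq)
  moreover have "u_c_star_r0 1 (1/2) 1 0 1 = - 1/2"
    by (simp add: u_c_star_r0_eq)
  ultimately show ?thesis
    by (intro exI[of _ 1] exI[of _ "1/2"] exI[of _ 1] exI[of _ 0] exI[of _ 1]) simp
qed

end
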